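(* Let $F$ be a field of characteristic $2$ and let $A$ be a quaternion algebra over $F$ with $A\cong[a,b)\cong[\alpha,\beta)$ for some $a,\alpha\in F$, $b,\beta\in F^\times$. Then there exists an element $y\in A$ with $y^2\in F^\times$ such that $A\cong[a,b)\cong[a,y^2)\cong[\alpha,y^2)\cong[\alpha,\beta)$.
   Context: For $\alpha\in F$, $\beta\in F^\times$, $[\alpha,\beta)$ denotes the quaternion algebra $F\langle i,j : i^2+i=\alpha,\ j^2=\beta,\ jij^{-1}=i+1\rangle$. *)

theory Defs
  imports Main
begin

definition F_algebra :: "('f::field \<Rightarrow> 'a::ring_1) \<Rightarrow> bool" where
  "F_algebra emb \<longleftrightarrow> emb 1 = 1 \<and>
     (\<forall>c d. emb (c + d) = emb c + emb d \<and> emb (c * d) = emb c * emb d) \<and>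
     (\<forall>c x. emb c * x = x * emb c)"

text \<open>(i, j) is a standard presentation of the algebra as the quaternion algebra
  [alpha, beta): i^2 + i = alpha, j^2 = beta, j i j^{-1} = i + 1 (equivalently,
  j being invertible as beta is nonzero, j i = (i + 1) j), and 1, i, j, ij is an F-basis.\<close>
definition quat_pres ::
  "('f::field \<Rightarrow> 'a::ring_1) \<Rightarrow> 'f \<Rightarrow> 'f \<Rightarrow> 'a \<Rightarrow> 'a \<Rightarrow> bool" where
  "quat_pres emb \<alpha> \<beta> i j \<longleftrightarrow>
     i * i + i = emb \<alpha> \<and> j * j = emb \<beta> \<and> j * i = (i + 1) * j \<and>
     (\<forall>x. \<exists>!c :: 'f \<times> 'f \<times> 'f \<times> 'f.
        x = emb (fst c) + emb (fst (snd c)) * i + emb (fst (snd (snd c))) * j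
            + emb (snd (snd (snd c))) * (i * j))"

definition iso_quat :: "('f::field \<Rightarrow> 'a::ring_1) \<Rightarrow> 'f \<Rightarrow> 'f \<Rightarrow> bool" where
  "iso_quat emb \<alpha> \<beta> \<longleftrightarrow> (\<exists>i j. quat_pres emb \<alpha> \<beta> i j)"

end

(* Fix a presentation (i, j) of [a, b). An element z = u j + v ij satisfies z i = (i + 1) z and
   z^2 = b N(u, v), where N is the norm form of F[i]; so when z^2 is nonzero, (i, z) presents
   [a, z^2). Given a second presentation (i', j') of [alpha, beta), a nonzero combination y of j'
   and i'j' can be chosen whose 1-coordinate with respect to 1, i, j, ij vanishes. Since y^2 lies
   in F and the characteristic is 2, its i-coordinate vanishes as well, so y lies in F j + F ij
   and in F j' + F i'j' at once. If y^2 is nonzero it is the common slot; otherwise both norm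
   forms are isotropic, hence universal, and both algebras are isomorphic to [-, 1). *)

theory Submission
  imports Defs
begin

lemma cramer_2x2:
  fixes m11 m12 m21 m22 r1 r2 :: "'a::field"
  assumes "m11 * m22 - m12 * m21 \<noteq> 0"
  shows "\<exists>!p. fst p * m11 + snd p * m12 = r1 \<and> fst p * m21 + snd p * m22 = r2"
proof -
  define D where "D = m11 * m22 - m12 * m21"
  have "D \<noteq> 0" using assms unfolding D_def .
  define x y where "x = (r1 * m22 - m12 * r2) / D" and "y = (m11 * r2 - r1 * m21) / D"
  have xD: "x * D = r1 * m22 - m12 * r2" and yD: "y * D = m11 * r2 - r1 * m21"
    using \<open>D \<noteq> 0\<close> unfolding x_def y_def by simp_all
  have "(x * m11 + y * m12) * D = (x * D) * m11 + (y * D) * m12"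
    "(x * m21 + y * m22) * D = (x * D) * m21 + (y * D) * m22"
    by (simp_all add: algebra_simps)
  then have "(x * m11 + y * m12) * D = r1 * D" "(x * m21 + y * m22) * D = r2 * D"
    unfolding xD yD by (simp_all add: D_def algebra_simps)
  then have solution: "x * m11 + y * m12 = r1 \<and> x * m21 + y * m22 = r2"
    using \<open>D \<noteq> 0\<close> by simp
  show ?thesis
  proof (rule ex1I[of _ "(x, y)"])
    show "fst (x, y) * m11 + snd (x, y) * m12 = r1 \<and> fst (x, y) * m21 + snd (x, y) * m22 = r2"
      using solution by simp
  next
    fix p :: "'a \<times> 'a"
    assume "fst p * m11 + snd p * m12 = r1 \<and> fst p * m21 + snd p * m22 = r2"
    then have "fst p * D = r1 * m22 - m12 * r2" "snd p * D = m11 * r2 - r1 * m21"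
      unfolding D_def by (auto simp: algebra_simps)
    then show "p = (x, y)"
      using \<open>D \<noteq> 0\<close> unfolding x_def y_def by (simp add: prod_eq_iff field_simps)
  qed
qed

locale field_algebra =
  fixes emb :: "'f::field \<Rightarrow> 'a::ring_1"
  assumes F_algebra: "F_algebra emb"
begin

lemma emb_add: "emb (c + d) = emb c + emb d"
  and emb_mult: "emb (c * d) = emb c * emb d"
  and emb_commute: "emb c * x = x * emb c"
  and emb_1: "emb 1 = 1"
  using F_algebra unfolding F_algebra_def by blast+

lemma emb_mult_assoc: "emb c * (emb d * x) = emb (c * d) * x"
  by (simp add: emb_mult mult.assoc)

lemma emb_0: "emb 0 = 0"
  using emb_add[of 0 0] by simp

lemma emb_diff: "emb (c - d) = emb c - emb d"
  using emb_add[of "c - d" d] by (simp add: eq_diff_eq)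

lemma emb_eq_0_iff: "emb c = 0 \<longleftrightarrow> c = 0"
proof
  assume "emb c = 0"
  show "c = 0"
  proof (rule ccontr)
    assume "c \<noteq> 0"
    then have "1 = emb c * emb (inverse c)"
      by (simp add: emb_1 flip: emb_mult)
    then show False
      using \<open>emb c = 0\<close> by simp
  qed
qed (simp add: emb_0)

lemma emb_eq_iff: "emb c = emb d \<longleftrightarrow> c = d"
  using emb_eq_0_iff[of "c - d"] by (simp add: emb_diff)

end

locale quat_presentation = field_algebra emb
  for emb :: "'f::field \<Rightarrow> 'a::ring_1" +
  fixes a b :: 'f and i j :: 'a
  assumes pres: "quat_pres emb a b i j"
begin

definition of_coords :: "'f \<Rightarrow> 'f \<Rightarrow> 'f \<Rightarrow> 'f \<Rightarrow> 'a" where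
  "of_coords x0 x1 x2 x3 = emb x0 + emb x1 * i + emb x2 * j + emb x3 * (i * j)"

lemma i_square: "i * i = emb a - i"
  and j_square: "j * j = emb b"
  and j_mult_i: "j * i = i * j + j"
  using pres unfolding quat_pres_def by (simp_all add: eq_diff_eq distrib_right)

lemma of_coords_surj: "\<exists>x0 x1 x2 x3. x = of_coords x0 x1 x2 x3"
  using pres unfolding quat_pres_def of_coords_def by (metis (no_types, lifting))

lemma of_coords_eq_iff:
  "of_coords x0 x1 x2 x3 = of_coords y0 y1 y2 y3 \<longleftrightarrow> x0 = y0 \<and> x1 = y1 \<and> x2 = y2 \<and> x3 = y3"
proof
  assume "of_coords x0 x1 x2 x3 = of_coords y0 y1 y2 y3"
  moreover obtain "\<exists>!c :: 'f \<times> 'f \<times> 'f \<times> 'f. of_coords x0 x1 x2 x3 =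
      of_coords (fst c) (fst (snd c)) (fst (snd (snd c))) (snd (snd (snd c)))"
    using pres unfolding quat_pres_def of_coords_def by blast
  ultimately have "(x0, x1, x2, x3) = (y0, y1, y2, y3)"
    by (metis fst_conv snd_conv)
  then show "x0 = y0 \<and> x1 = y1 \<and> x2 = y2 \<and> x3 = y3"
    by simp
qed simp

lemma of_coords_eq_0_iff:
  "of_coords x0 x1 x2 x3 = 0 \<longleftrightarrow> x0 = 0 \<and> x1 = 0 \<and> x2 = 0 \<and> x3 = 0"
proof -
  have "of_coords 0 0 0 0 = 0"
    unfolding of_coords_def by (simp add: emb_0)
  then show ?thesis
    using of_coords_eq_iff[of x0 x1 x2 x3 0 0 0 0] by simp
qed

lemma of_coords_add:
  "of_coords x0 x1 x2 x3 + of_coords y0 y1 y2 y3 = of_coords (x0 + y0) (x1 + y1) (x2 + y2) (x3 + y3)"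
  unfolding of_coords_def by (simp add: emb_add algebra_simps)

lemma emb_mult_of_coords:
  "emb c * of_coords x0 x1 x2 x3 = of_coords (c * x0) (c * x1) (c * x2) (c * x3)"
  unfolding of_coords_def by (simp add: emb_mult algebra_simps)

lemma i_mult_of_coords:
  "i * of_coords x0 x1 x2 x3 = of_coords (a * x1) (x0 - x1) (a * x3) (x2 - x3)"
proof -
  have i_emb: "i * (emb c * x) = emb c * (i * x)" for c x
    by (metis emb_commute mult.assoc)
  have i_ij: "i * (i * j) = emb a * j - i * j"
    by (metis i_square mult.assoc left_diff_distrib)
  show ?thesis
    unfolding of_coords_def
    by (simp add: distrib_left i_emb i_ij emb_add emb_diff emb_mult_assoc
        emb_commute[of _ i, symmetric] i_square emb_mult[symmetric] algebra_simps)
qed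

lemma j_mult_of_coords:
  "j * of_coords x0 x1 x2 x3 = of_coords (b * x2 + b * x3) (b * x3) (x0 + x1) x1"
proof -
  have j_emb: "j * (emb c * x) = emb c * (j * x)" for c x
    by (metis emb_commute mult.assoc)
  have j_ij: "j * (i * j) = emb b * i + emb b"
    by (metis j_mult_i j_square mult.assoc distrib_right emb_commute)
  show ?thesis
    unfolding of_coords_def
    by (simp add: distrib_left j_emb j_ij emb_add emb_mult_assoc
        emb_commute[of _ j, symmetric] j_mult_i j_square emb_mult[symmetric] algebra_simps)
qed

lemma of_coords_mult:
  "of_coords x0 x1 x2 x3 * of_coords y0 y1 y2 y3 =
    of_coords (x0 * y0 + x1 * a * y1 + x2 * (b * y2 + b * y3) + x3 * a * b * y3)
      (x0 * y1 + x1 * (y0 - y1) + x2 * b * y3 + x3 * b * y2)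
      (x0 * y2 + x1 * a * y3 + x2 * (y0 + y1) + x3 * a * y1)
      (x0 * y3 + x1 * (y2 - y3) + x2 * y1 + x3 * y0)"
proof -
  have "of_coords x0 x1 x2 x3 * y = emb x0 * y + emb x1 * (i * y) + emb x2 * (j * y)
      + emb x3 * (i * (j * y))" for y
    unfolding of_coords_def by (simp add: algebra_simps)
  then show ?thesis
    by (simp add: i_mult_of_coords j_mult_of_coords emb_mult_of_coords of_coords_add algebra_simps)
qed

lemma emb_eq_of_coords: "emb c = of_coords c 0 0 0"
  and i_eq_of_coords: "i = of_coords 0 1 0 0"
  and i_plus_1_eq_of_coords: "i + 1 = of_coords 1 1 0 0"
  unfolding of_coords_def by (simp_all add: emb_0 emb_1 add.commute)

lemma jpart_mult_i: "of_coords 0 0 u v * i = (i + 1) * of_coords 0 0 u v"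
proof -
  have "of_coords 0 0 u v * of_coords 0 1 0 0 = of_coords 1 1 0 0 * of_coords 0 0 u v"
    unfolding of_coords_mult by (simp add: algebra_simps)
  then show ?thesis
    by (simp flip: i_eq_of_coords i_plus_1_eq_of_coords)
qed

lemma jpart_coords:
  assumes "z = of_coords 0 0 u v"
  shows "emb e0 + emb e1 * i + emb e2 * z + emb e3 * (i * z)
    = of_coords e0 e1 (e2 * u + e3 * (a * v)) (e2 * v + e3 * (u - v))"
proof -
  have "emb e0 + emb e1 * i = of_coords e0 e1 0 0"
    unfolding of_coords_def by (simp add: emb_0)
  then show ?thesis
    unfolding assms i_mult_of_coords emb_mult_of_coords by (simp add: of_coords_add algebra_simps)
qed

text \<open>u (u - v) - a v^2 is the determinant of z, i z with respect to j, i j.\<close>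
lemma quat_pres_jpart:
  assumes z: "z = of_coords 0 0 u v" and zz: "z * z = emb c"
    and det: "u * (u - v) - a * v * v \<noteq> 0"
  shows "quat_pres emb a c i z"
proof -
  have "\<exists>!e :: 'f \<times> 'f \<times> 'f \<times> 'f. x = emb (fst e) + emb (fst (snd e)) * i
      + emb (fst (snd (snd e))) * z + emb (snd (snd (snd e))) * (i * z)" for x
  proof -
    obtain d0 d1 d2 d3 where x: "x = of_coords d0 d1 d2 d3"
      using of_coords_surj by blast
    obtain q where q: "fst q * u + snd q * (a * v) = d2 \<and> fst q * v + snd q * (u - v) = d3"
      and q_unique: "\<And>q'. fst q' * u + snd q' * (a * v) = d2 \<and> fst q' * v + snd q' * (u - v) = d3
        \<Longrightarrow> q' = q"
      using cramer_2x2[OF det, of d2 d3] by (elim ex1E) blast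
    have coords_iff: "x = emb e0 + emb e1 * i + emb e2 * z + emb e3 * (i * z) \<longleftrightarrow>
        e0 = d0 \<and> e1 = d1 \<and> e2 * u + e3 * (a * v) = d2 \<and> e2 * v + e3 * (u - v) = d3"
      for e0 e1 e2 e3
      unfolding x jpart_coords[OF z] of_coords_eq_iff by auto
    show ?thesis
    proof (rule ex1I[of _ "(d0, d1, q)"])
      fix e :: "'f \<times> 'f \<times> 'f \<times> 'f"
      assume "x = emb (fst e) + emb (fst (snd e)) * i
        + emb (fst (snd (snd e))) * z + emb (snd (snd (snd e))) * (i * z)"
      then show "e = (d0, d1, q)"
        using coords_iff q_unique[of "snd (snd e)"] by (simp add: prod_eq_iff)
    qed (use coords_iff q in simp)
  qed
  moreover have "i * i + i = emb a"
    by (simp add: i_square)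
  ultimately show ?thesis
    unfolding quat_pres_def using zz jpart_mult_i z by blast
qed

end

text \<open>The norm of u + v i in F[i], where i^2 + i = a.\<close>
definition norm_form :: "'f::field \<Rightarrow> 'f \<Rightarrow> 'f \<Rightarrow> 'f" where
  "norm_form a u v = u * u + u * v + a * v * v"

lemma norm_form_isotropic_imp_universal:
  fixes a u v e :: "'f::field"
  assumes char2: "(2::'f) = 0" and isotropic: "norm_form a u v = 0" and "(u, v) \<noteq> (0, 0)"
  obtains u' v' where "norm_form a u' v' = e"
proof -
  have "v \<noteq> 0"
  proof
    assume "v = 0"
    then have "u * u = 0"
      using isotropic by (simp add: norm_form_def)
    then show False
      using \<open>(u, v) \<noteq> (0, 0)\<close> \<open>v = 0\<close> by simp
  qed
  define t where "t = u / v"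
  have "(t * t + t + a) * (v * v) = norm_form a u v"
    unfolding t_def norm_form_def using \<open>v \<noteq> 0\<close> by (simp add: field_simps)
  then have root: "t * t + t + a = 0"
    using isotropic \<open>v \<noteq> 0\<close> by simp
  \<comment> \<open>In characteristic 2, N(1 + t w, w) = 1 + w because t is a root of X^2 + X + a.\<close>
  define w where "w = e - 1"
  have "norm_form a (1 + t * w) w = 1 + w + (t * t + t + a) * (w * w) + 2 * (t * w)"
    unfolding norm_form_def by (simp add: algebra_simps)
  also have "\<dots> = e"
    using root char2 unfolding w_def by simp
  finally show ?thesis
    by (rule that)
qed

locale quat_presentation_char2 = quat_presentation emb a b i j
  for emb :: "'f::field \<Rightarrow> 'a::ring_1" and a b i j +
  assumes char2: "(2::'f) = 0"
begin

lemma i_coeff_eq_0_if_square_in_F: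
  assumes "of_coords x0 x1 x2 x3 * of_coords x0 x1 x2 x3 = emb e"
  shows "x1 = 0"
proof -
  have "of_coords x0 x1 x2 x3 * of_coords x0 x1 x2 x3 = of_coords e 0 0 0"
    using assms by (simp add: emb_eq_of_coords)
  then have "x0 * x1 + x1 * (x0 - x1) + x2 * b * x3 + x3 * b * x2 = 0"
    unfolding of_coords_mult of_coords_eq_iff by blast
  moreover have "x0 * x1 + x1 * (x0 - x1) + x2 * b * x3 + x3 * b * x2
      = 2 * (x0 * x1 + x2 * b * x3) - x1 * x1"
    by (simp add: algebra_simps)
  ultimately show "x1 = 0"
    using char2 by simp
qed

lemma jpart_square: "of_coords 0 0 u v * of_coords 0 0 u v = emb (b * norm_form a u v)"
  unfolding of_coords_mult emb_eq_of_coords of_coords_eq_iff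
  by (simp add: norm_form_def algebra_simps char2)

lemma quat_pres_jpart_char2:
  assumes z: "z = of_coords 0 0 u v" and zz: "z * z = emb c" and "c \<noteq> 0"
  shows "quat_pres emb a c i z"
proof (rule quat_pres_jpart[OF z zz])
  have "c = b * norm_form a u v"
    using zz jpart_square z emb_eq_iff by metis
  then have "norm_form a u v \<noteq> 0"
    using \<open>c \<noteq> 0\<close> by auto
  moreover have "u * (u - v) - a * v * v = norm_form a u v - 2 * (u * v + a * v * v)"
    by (simp add: norm_form_def algebra_simps)
  ultimately show "u * (u - v) - a * v * v \<noteq> 0"
    using char2 by simp
qed

lemma iso_quat_1_if_isotropic:
  assumes "b \<noteq> 0" and "(u, v) \<noteq> (0, 0)" and "of_coords 0 0 u v * of_coords 0 0 u v = 0"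
  shows "iso_quat emb a 1"
proof -
  have "norm_form a u v = 0"
    using assms(1,3) by (simp add: jpart_square emb_eq_0_iff)
  then obtain u' v' where "norm_form a u' v' = inverse b"
    using norm_form_isotropic_imp_universal[OF char2 _ assms(2)] by blast
  then have "of_coords 0 0 u' v' * of_coords 0 0 u' v' = emb 1"
    using assms(1) by (simp add: jpart_square)
  then have "quat_pres emb a 1 i (of_coords 0 0 u' v')"
    by (rule quat_pres_jpart_char2[OF refl]) simp
  then show ?thesis
    unfolding iso_quat_def by blast
qed

end

lemma common_jpart_element:
  assumes "quat_presentation_char2 emb a b i j" and "quat_presentation_char2 emb \<alpha> \<beta> i' j'"
  obtains u v p q where "(u, v) \<noteq> (0, 0)" and "(p, q) \<noteq> (0, 0)"
    and "quat_presentation.of_coords emb i j 0 0 u v = quat_presentation.of_coords emb i' j' 0 0 p q"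
proof -
  interpret field_algebra emb
    using assms(1) by (simp add: quat_presentation_char2_def quat_presentation_def)
  interpret P: quat_presentation_char2 emb a b i j by fact
  interpret Q: quat_presentation_char2 emb \<alpha> \<beta> i' j' by fact
  obtain d0 d1 d2 d3 where j': "j' = P.of_coords d0 d1 d2 d3"
    using P.of_coords_surj by blast
  obtain f0 f1 f2 f3 where ij': "i' * j' = P.of_coords f0 f1 f2 f3"
    using P.of_coords_surj by blast
  have "\<exists>p q. (p, q) \<noteq> (0, 0) \<and> p * d0 + q * f0 = 0"
  proof (cases "d0 = 0 \<and> f0 = 0")
    case True
    then show ?thesis by (intro exI[of _ 1] exI[of _ 0]) simp
  next
    case False
    then show ?thesis by (intro exI[of _ f0] exI[of _ "- d0"]) (auto simp: algebra_simps)
  qed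
  then obtain p q where pq: "(p, q) \<noteq> (0, 0)" "p * d0 + q * f0 = 0"
    by blast
  define y where "y = Q.of_coords 0 0 p q"
  have "y = emb p * j' + emb q * (i' * j')"
    unfolding y_def Q.of_coords_def by (simp add: emb_0)
  also have "\<dots> = P.of_coords 0 (p * d1 + q * f1) (p * d2 + q * f2) (p * d3 + q * f3)"
    unfolding ij' by (simp add: j' P.emb_mult_of_coords P.of_coords_add pq(2))
  finally have y_P: "y = P.of_coords 0 (p * d1 + q * f1) (p * d2 + q * f2) (p * d3 + q * f3)" .
  have "y * y = emb (\<beta> * norm_form \<alpha> p q)"
    unfolding y_def by (rule Q.jpart_square)
  then have "p * d1 + q * f1 = 0"
    using P.i_coeff_eq_0_if_square_in_F y_P by metis
  moreover have "y \<noteq> 0"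
    using pq(1) unfolding y_def Q.of_coords_eq_0_iff by simp
  ultimately show ?thesis
    using that[of "p * d2 + q * f2" "p * d3 + q * f3" p q] pq(1) y_P
    unfolding y_def by (auto simp: P.of_coords_eq_0_iff)
qed

theorem lemma4:
  fixes emb :: "'f::field \<Rightarrow> 'a::ring_1"
    and a b \<alpha> \<beta> :: 'f
  assumes "CHAR('f) = 2"
    and "F_algebra emb"
    and "b \<noteq> 0" and "\<beta> \<noteq> 0"
    and "iso_quat emb a b"
    and "iso_quat emb \<alpha> \<beta>"
  shows "\<exists>y :: 'a. \<exists>c :: 'f. c \<noteq> 0 \<and> y * y = emb c \<and>
           iso_quat emb a b \<and> iso_quat emb a c \<and> iso_quat emb \<alpha> c \<and> iso_quat emb \<alpha> \<beta>"
proof -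
  have char2: "(2::'f) = 0"
    using of_nat_CHAR[where 'a='f] assms(1) by simp
  obtain i j i' j' where pres: "quat_pres emb a b i j" and pres': "quat_pres emb \<alpha> \<beta> i' j'"
    using assms(5,6) unfolding iso_quat_def by blast
  interpret field_algebra emb
    using assms(2) by unfold_locales
  interpret P: quat_presentation_char2 emb a b i j
    using pres char2 by unfold_locales
  interpret Q: quat_presentation_char2 emb \<alpha> \<beta> i' j'
    using pres' char2 by unfold_locales
  obtain u v p q where uv: "(u, v) \<noteq> (0, 0)" and pq: "(p, q) \<noteq> (0, 0)"
    and y: "P.of_coords 0 0 u v = Q.of_coords 0 0 p q"
    by (rule common_jpart_element[OF P.quat_presentation_char2_axioms
          Q.quat_presentation_char2_axioms])
  define c where "c = \<beta> * norm_form \<alpha> p q"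
  have yy: "Q.of_coords 0 0 p q * Q.of_coords 0 0 p q = emb c"
    unfolding c_def by (rule Q.jpart_square)
  show ?thesis
  proof (cases "c = 0")
    case False
    then have "quat_pres emb a c i (Q.of_coords 0 0 p q)"
      and "quat_pres emb \<alpha> c i' (Q.of_coords 0 0 p q)"
      using P.quat_pres_jpart_char2[OF y[symmetric] yy] Q.quat_pres_jpart_char2[OF refl yy] by auto
    then show ?thesis
      using False yy assms(5,6) unfolding iso_quat_def by blast
  next
    case True
    then have "iso_quat emb a 1" "iso_quat emb \<alpha> 1"
      using P.iso_quat_1_if_isotropic[OF assms(3) uv] Q.iso_quat_1_if_isotropic[OF assms(4) pq]
        yy y by (simp_all add: emb_0)
    then show ?thesis
      using assms(5,6) emb_1 by (intro exI[of _ 1] exI[of _ 1]) simp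
  qed
qed

end
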